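(* Consider the following water-filling process. Set $\pi^1=0\in\mathbb{R}^N$ and $W^1_a=W$. While $W^t_a\neq\emptyset$: let $$\Delta\pi^t=\min_{S\subseteq N,\ W^t_a\not\subseteq S}\ \frac{w(N)-w(S)-\sum_{i\in N\setminus S}\pi^t_i}{|W^t_a\setminus S|},$$ let $S^*$ be any coalition attaining this minimum, set $W^t_f=W^t_a\setminus S^*$, define $\pi^{t+1}_i=\pi^t_i+\Delta\pi^t$ for $i\in W^t_a$ and $\pi^{t+1}_i=\pi^t_i$ otherwise, set $W^{t+1}_a=W^t_a\setminus W^t_f$, and increase $t$ by one. Then this process terminates after at most $|W|$ iterations, and the final vector $\pi^T$ (where $W^T_a=\emptyset$) is the BLO outcome.
   Context: A combinatorial auction (CA) has a finite set of bidders $N=\{1,\dots,n\}$, a finite set of items $M$, and for each bidder $i$ a valuation $v_i:2^M\to\mathbb{R}_{\ge 0}$ with $v_i(\emptyset)=0$. For $S\subseteq N$ let $w(S)=\max\{\sum_{i\in S}v_i(a_i): a_i\subseteq M,\ a_i\cap a_j=\emptyset\ (i\ne j)\}$ (with $w(\emptyset)=0$). Fix an allocation $(a^*_i)_{i\in N}$ attaining $w(N)$; the winner set is $W=\{i: a^*_i\neq\emptyset\}$. The core is $U=\{\pi\in\mathbb{R}^N:\ \pi_i\ge 0\ \forall i\in N,\ \sum_{i\in N\setminus S}\pi_i\le w(N)-w(S)\ \forall S\subseteq N\}$. (Equivalently, $\Delta\pi^t$ above is the largest $\Delta$ such that increasing the utility of every bidder in $W^t_a$ by $\Delta$, keeping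 the others fixed, stays in $U$.) For $x,y\in\mathbb{R}^n$, $x$ leximin-dominates $y$ if, writing $x_{(1)}\le\dots\le x_{(n)}$ and $y_{(1)}\le\dots\le y_{(n)}$ for the sorted entries, there is $0\le k\le n-1$ with $x_{(j)}=y_{(j)}$ for $j\le k$ and $x_{(k+1)}>y_{(k+1)}$. The BLO outcome is the (unique) $\pi\in U$ not leximin-dominated by any $\pi'\in U$. *)

theory Defs
  imports Complex_Main "HOL-Library.Multiset"
begin

(* Bidders are the elements of a finite type 'b (so N = UNIV), items are the
   elements of a finite type 'm (so M = UNIV).  A valuation profile is
   v :: 'b => 'm set => real. *)

definition feasible_alloc :: "'b set \<Rightarrow> ('b \<Rightarrow> 'm set) \<Rightarrow> bool" where
  "feasible_alloc S a \<longleftrightarrow> (\<forall>i\<in>S. \<forall>j\<in>S. i \<noteq> j \<longrightarrow> a i \<inter> a j = {})"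

definition coal_value :: "('b \<Rightarrow> 'm set \<Rightarrow> real) \<Rightarrow> 'b set \<Rightarrow> real" where
  "coal_value v S = Max {(\<Sum>i\<in>S. v i (a i)) | a. feasible_alloc S a}"

definition core :: "('b::finite \<Rightarrow> 'm set \<Rightarrow> real) \<Rightarrow> ('b \<Rightarrow> real) set" where
  "core v = {\<pi>. (\<forall>i. 0 \<le> \<pi> i) \<and>
      (\<forall>S. (\<Sum>i\<in>UNIV - S. \<pi> i) \<le> coal_value v UNIV - coal_value v S)}"

definition sorted_entries :: "('b::finite \<Rightarrow> real) \<Rightarrow> real list" where
  "sorted_entries x = sorted_list_of_multiset (image_mset x (mset_set UNIV))"

definition leximin_dominates :: "('b::finite \<Rightarrow> real) \<Rightarrow> ('b \<Rightarrow> real) \<Rightarrow> bool" where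
  "leximin_dominates x y \<longleftrightarrow>
     (\<exists>k. k < card (UNIV :: 'b set) \<and> (\<forall>j<k. sorted_entries x ! j = sorted_entries y ! j)
                      \<and> sorted_entries x ! k > sorted_entries y ! k)"

definition BLO_outcome :: "('b::finite \<Rightarrow> 'm set \<Rightarrow> real) \<Rightarrow> ('b \<Rightarrow> real) \<Rightarrow> bool" where
  "BLO_outcome v \<pi> \<longleftrightarrow> \<pi> \<in> core v \<and> \<not> (\<exists>\<pi>'\<in>core v. leximin_dominates \<pi>' \<pi>)"

definition wf_ratio :: "('b::finite \<Rightarrow> 'm set \<Rightarrow> real) \<Rightarrow> ('b \<Rightarrow> real) \<Rightarrow> 'b set \<Rightarrow> 'b set \<Rightarrow> real" where
  "wf_ratio v \<pi> Wa S =
     (coal_value v UNIV - coal_value v S - (\<Sum>i\<in>UNIV - S. \<pi> i)) / real (card (Wa - S))"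

definition wf_delta :: "('b::finite \<Rightarrow> 'm set \<Rightarrow> real) \<Rightarrow> ('b \<Rightarrow> real) \<Rightarrow> 'b set \<Rightarrow> real" where
  "wf_delta v \<pi> Wa = Min {wf_ratio v \<pi> Wa S | S. \<not> Wa \<subseteq> S}"

definition wf_step :: "('b::finite \<Rightarrow> 'm set \<Rightarrow> real) \<Rightarrow> ('b \<Rightarrow> real) \<Rightarrow> 'b set
      \<Rightarrow> ('b \<Rightarrow> real) \<Rightarrow> 'b set \<Rightarrow> bool" where
  "wf_step v \<pi> Wa \<pi>' Wa' \<longleftrightarrow>
     (\<exists>Sstar. \<not> Wa \<subseteq> Sstar \<and> wf_ratio v \<pi> Wa Sstar = wf_delta v \<pi> Wa \<and>
        (\<forall>i. \<pi>' i = (if i \<in> Wa then \<pi> i + wf_delta v \<pi> Wa else \<pi> i)) \<and>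
        Wa' = Wa - (Wa - Sstar))"

end

theory Submission
  imports Defs
begin

text \<open>
  Every step of the water-filling process keeps the payoff vector in the core: the increment
  \<open>\<Delta>\<close> is exactly the largest one the core constraints permit.  When a bidder \<open>i\<close> leaves the
  active set, it does so because a core constraint for some coalition \<open>S \<not>\<ni> i\<close> became tight,
  and since the active bidders always hold the largest payoffs, \<open>i\<close> has a maximal payoff
  among \<open>N - S\<close>; later steps do not change payoffs outside the active set.  Now compare the
  final vector \<open>x\<close> with any other core vector \<open>y\<close> and let \<open>c\<close> be the smallest entry of
  \<open>x\<close> or \<open>y\<close> at a bidder where they differ.  If \<open>x\<close> attained \<open>c\<close> at such a bidder \<open>i\<close>, then
  \<open>y \<ge> x\<close> on \<open>N - S\<close> with strict inequality at \<open>i\<close>, and \<open>y\<close> would violate the tight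
  constraint for \<open>S\<close>.  (Losing bidders receive \<open>0\<close> in every core vector.)  Hence \<open>c\<close> is
  attained only by \<open>y\<close>, so \<open>y\<close> has strictly more entries \<open>\<le> c\<close> and the same number below
  \<open>c\<close>, which means that \<open>y\<close> does not leximin-dominate \<open>x\<close>.
\<close>

subsection \<open>Leximin order\<close>

lemma sorted_sorted_entries: "sorted (sorted_entries x)"
  by (simp add: sorted_entries_def)

lemma length_sorted_entries: "length (sorted_entries x) = card (UNIV :: 'b set)"
  for x :: "'b::finite \<Rightarrow> real"
  unfolding sorted_entries_def
  by (metis size_mset mset_sorted_list_of_multiset size_image_mset size_mset_set)

lemma length_filter_le_sorted_entries:
  "length (filter (\<lambda>z. z \<le> d) (sorted_entries x)) = card {i. x i \<le> d}"
  for x :: "'b::finite \<Rightarrow> real"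
proof -
  have "length (filter (\<lambda>z. z \<le> d) (sorted_entries x))
      = size (filter_mset (\<lambda>z. z \<le> d) (mset (sorted_entries x)))"
    by (metis mset_filter size_mset)
  also have "\<dots> = size (filter_mset (\<lambda>z. z \<le> d) (image_mset x (mset_set UNIV)))"
    by (simp add: sorted_entries_def)
  finally show ?thesis
    by (simp add: filter_mset_image_mset)
qed

lemma sorted_nth_le_drop:
  assumes "sorted xs" "z \<in> set (drop k xs)"
  shows "xs ! k \<le> z"
proof -
  obtain m where "m < length (drop k xs)" "z = drop k xs ! m"
    using assms(2) by (auto simp: in_set_conv_nth)
  then have "z = xs ! (k + m)" "k + m < length xs"
    by auto
  then show ?thesis
    using sorted_nth_mono[OF assms(1), of k "k + m"] by simp
qed

text \<open>The threshold \<open>c\<close> is the \<open>k\<close>-th smallest entry of \<open>x\<close>, where \<open>k\<close> is the first position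
  at which the sorted entries of \<open>x\<close> and \<open>y\<close> differ.\<close>

lemma leximin_dominates_card_le:
  fixes x y :: "'b::finite \<Rightarrow> real"
  assumes "leximin_dominates y x"
  obtains c where "\<And>d. d < c \<Longrightarrow> card {i. y i \<le> d} = card {i. x i \<le> d}"
    and "card {i. y i \<le> c} < card {i. x i \<le> c}"
proof -
  define xs ys where "xs = sorted_entries x" and "ys = sorted_entries y"
  obtain k where k: "k < card (UNIV :: 'b set)" "\<forall>j<k. ys ! j = xs ! j" "xs ! k < ys ! k"
    using assms unfolding leximin_dominates_def xs_def ys_def by blast
  have len: "length xs = card (UNIV :: 'b set)" "length ys = card (UNIV :: 'b set)"
    by (simp_all add: xs_def ys_def length_sorted_entries)
  have sorted: "sorted xs" "sorted ys"
    by (simp_all add: xs_def ys_def sorted_sorted_entries)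
  have take_eq: "take k ys = take k xs"
    by (rule nth_equalityI) (use k len in auto)
  define c where "c = xs ! k"
  have split: "length (filter P zs) = length (filter P (take k zs)) + length (filter P (drop k zs))"
    for P and zs :: "real list"
    by (metis append_take_drop_id filter_append length_append)
  have drop_ys: "filter (\<lambda>z. z \<le> d) (drop k ys) = []" if "d \<le> c" for d
    using sorted_nth_le_drop[OF sorted(2)] k(3) that unfolding c_def
    by (fastforce simp: filter_empty_conv)
  have drop_xs: "filter (\<lambda>z. z \<le> d) (drop k xs) = []" if "d < c" for d
    using sorted_nth_le_drop[OF sorted(1)] that unfolding c_def
    by (fastforce simp: filter_empty_conv)
  have "c \<in> set (drop k xs)"
    using k(1) len unfolding c_def by (metis Cons_nth_drop_Suc list.set_intros(1))
  then have drop_xs_c: "filter (\<lambda>z. z \<le> c) (drop k xs) \<noteq> []"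
    by (auto simp: filter_empty_conv)
  show thesis
  proof
    fix d assume "d < c"
    then show "card {i. y i \<le> d} = card {i. x i \<le> d}"
      using split[of "\<lambda>z. z \<le> d" ys] split[of "\<lambda>z. z \<le> d" xs] drop_ys[of d] drop_xs[of d] take_eq
      by (simp add: length_filter_le_sorted_entries[symmetric] xs_def ys_def)
  next
    show "card {i. y i \<le> c} < card {i. x i \<le> c}"
      using split[of "\<lambda>z. z \<le> c" ys] split[of "\<lambda>z. z \<le> c" xs] drop_ys[of c] drop_xs_c take_eq
      by (simp add: length_filter_le_sorted_entries[symmetric] xs_def ys_def)
  qed
qed

lemma not_leximin_dominates_if_lower_deviation:
  fixes x y :: "'b::finite \<Rightarrow> real"
  assumes above: "\<And>i. x i \<noteq> y i \<Longrightarrow> c \<le> y i \<and> c < x i"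
    and attained: "x j \<noteq> y j" "y j = c"
  shows "\<not> leximin_dominates y x"
proof
  assume "leximin_dominates y x"
  then obtain c' where below_c': "\<And>d. d < c' \<Longrightarrow> card {i. y i \<le> d} = card {i. x i \<le> d}"
    and at_c': "card {i. y i \<le> c'} < card {i. x i \<le> c'}"
    by (metis leximin_dominates_card_le)
  have below_c: "{i. y i \<le> d} = {i. x i \<le> d}" if "d < c" for d
    using above that by (smt (verit) Collect_cong)
  have "{i. x i \<le> c} \<subseteq> {i. y i \<le> c}"
  proof
    fix i assume "i \<in> {i. x i \<le> c}"
    then show "i \<in> {i. y i \<le> c}"
      using above[of i] by (cases "x i = y i") auto
  qed
  moreover have "j \<in> {i. y i \<le> c} - {i. x i \<le> c}"
    using above[of j] attained by auto
  ultimately have at_c: "card {i. x i \<le> c} < card {i. y i \<le> c}"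
    by (intro psubset_card_mono) auto
  show False
  proof (cases c' c rule: linorder_cases)
    case less
    then show False using below_c at_c' by simp
  next
    case equal
    then show False using at_c at_c' by simp
  next
    case greater
    then show False using below_c' at_c by fastforce
  qed
qed

subsection \<open>Coalitional values and the core\<close>

definition tight_coalition :: "('b::finite \<Rightarrow> 'm set \<Rightarrow> real) \<Rightarrow> ('b \<Rightarrow> real) \<Rightarrow> 'b set \<Rightarrow> bool"
  where "tight_coalition v x S \<longleftrightarrow> (\<Sum>i\<in>UNIV - S. x i) = coal_value v UNIV - coal_value v S"

lemma finite_alloc_values: "finite {(\<Sum>i\<in>S. v i (a i)) | a. feasible_alloc S a}"
  for v :: "'b::finite \<Rightarrow> 'm::finite set \<Rightarrow> real"
  by (rule finite_subset[of _ "(\<lambda>a. \<Sum>i\<in>S. v i (a i)) ` UNIV"]) auto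

lemma coal_value_ge: "feasible_alloc S a \<Longrightarrow> (\<Sum>i\<in>S. v i (a i)) \<le> coal_value v S"
  for v :: "'b::finite \<Rightarrow> 'm::finite set \<Rightarrow> real"
  unfolding coal_value_def by (rule Max_ge[OF finite_alloc_values]) blast

lemma coal_value_attained:
  fixes v :: "'b::finite \<Rightarrow> 'm::finite set \<Rightarrow> real"
  obtains a where "feasible_alloc S a" "coal_value v S = (\<Sum>i\<in>S. v i (a i))"
proof -
  have "feasible_alloc S (\<lambda>_. {})"
    by (simp add: feasible_alloc_def)
  then have "coal_value v S \<in> {(\<Sum>i\<in>S. v i (a i)) | a. feasible_alloc S a}"
    unfolding coal_value_def by (intro Max_in[OF finite_alloc_values]) blast
  then show thesis
    using that by blast
qed

lemma coal_value_le_UNIV: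
  fixes v :: "'b::finite \<Rightarrow> 'm::finite set \<Rightarrow> real"
  assumes "\<And>i. v i {} = 0"
  shows "coal_value v S \<le> coal_value v UNIV"
proof -
  obtain a where a: "feasible_alloc S a" "coal_value v S = (\<Sum>i\<in>S. v i (a i))"
    by (rule coal_value_attained)
  define a' where "a' i = (if i \<in> S then a i else {})" for i
  have "feasible_alloc UNIV a'"
    using a(1) by (auto simp: feasible_alloc_def a'_def)
  moreover have "(\<Sum>i\<in>UNIV. v i (a' i)) = (\<Sum>i\<in>S. v i (a i))"
    by (subst sum.mono_neutral_right[of UNIV S]) (auto simp: a'_def assms)
  ultimately show ?thesis
    using coal_value_ge a(2) by metis
qed

lemma zero_in_core:
  fixes v :: "'b::finite \<Rightarrow> 'm::finite set \<Rightarrow> real"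
  assumes "\<And>i. v i {} = 0"
  shows "(\<lambda>_. 0) \<in> core v"
  using coal_value_le_UNIV[of v] assms by (simp add: core_def)

text \<open>A bidder who receives nothing in an efficient allocation can be removed without loss of
  welfare, so the core constraint for \<open>N - {i}\<close> forces its utility to be \<open>0\<close>.\<close>

lemma core_unallocated_eq_0:
  fixes v :: "'b::finite \<Rightarrow> 'm::finite set \<Rightarrow> real"
  assumes "\<And>i. v i {} = 0" and "feasible_alloc UNIV astar"
    and "(\<Sum>i\<in>UNIV. v i (astar i)) = coal_value v UNIV"
    and "astar i = {}" and "y \<in> core v"
  shows "y i = 0"
proof -
  have "coal_value v UNIV = (\<Sum>j\<in>UNIV - {i}. v j (astar j))"
    using assms(1,3,4) by (simp add: sum.remove[of UNIV i] add.commute)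
  also have "\<dots> \<le> coal_value v (UNIV - {i})"
    using assms(2) by (intro coal_value_ge) (auto simp: feasible_alloc_def)
  finally have "coal_value v UNIV \<le> coal_value v (UNIV - {i})" .
  moreover have "(\<Sum>j\<in>UNIV - (UNIV - {i}). y j) \<le> coal_value v UNIV - coal_value v (UNIV - {i})"
    using assms(5) unfolding core_def by blast
  moreover have "UNIV - (UNIV - {i}) = {i}"
    by blast
  moreover have "0 \<le> y i"
    using assms(5) unfolding core_def by blast
  ultimately show ?thesis
    by simp
qed

lemma core_lower_deviation:
  fixes v :: "'b::finite \<Rightarrow> 'm set \<Rightarrow> real"
  assumes y: "y \<in> core v" "y \<noteq> x"
    and pinned_or_tight: "\<And>i. (\<forall>y\<in>core v. y i = x i) \<or>
      (\<exists>S. i \<notin> S \<and> (\<forall>k. k \<notin> S \<longrightarrow> x k \<le> x i) \<and> tight_coalition v x S)"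
  obtains c j where "\<And>i. x i \<noteq> y i \<Longrightarrow> c \<le> y i \<and> c < x i" and "x j \<noteq> y j" "y j = c"
proof -
  define D where "D = {i. x i \<noteq> y i}"
  have "D \<noteq> {}"
    using y(2) unfolding D_def by auto
  define c where "c = Min ((\<lambda>i. min (x i) (y i)) ` D)"
  have c_le: "c \<le> min (x i) (y i)" if "i \<in> D" for i
    unfolding c_def using that by (intro Min.coboundedI) auto
  have "c \<in> (\<lambda>i. min (x i) (y i)) ` D"
    unfolding c_def using \<open>D \<noteq> {}\<close> by (intro Min_in) simp_all
  then obtain j where j: "j \<in> D" "c = min (x j) (y j)"
    by blast
  have x_ne_c: "x i \<noteq> c" if "i \<in> D" for i
  proof
    assume xi: "x i = c"
    have "\<not> (\<forall>y'\<in>core v. y' i = x i)"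
    proof
      assume "\<forall>y'\<in>core v. y' i = x i"
      then have "y i = x i"
        using y(1) by blast
      then show False
        using that unfolding D_def by simp
    qed
    then obtain S where S: "i \<notin> S" "\<And>k. k \<notin> S \<Longrightarrow> x k \<le> x i" "tight_coalition v x S"
      using pinned_or_tight[of i] by auto
    have "x k \<le> y k" if "k \<notin> S" for k
      using S(2)[OF that] c_le[of k] xi unfolding D_def by (cases "k \<in> D") (auto simp: D_def)
    moreover have "x i < y i"
      using c_le[OF that] xi that unfolding D_def by auto
    ultimately have "(\<Sum>k\<in>UNIV - S. x k) < (\<Sum>k\<in>UNIV - S. y k)"
      using S(1) by (intro sum_strict_mono_ex1) auto
    moreover have "(\<Sum>k\<in>UNIV - S. y k) \<le> coal_value v UNIV - coal_value v S"
      using y(1) unfolding core_def by blast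
    ultimately show False
      using S(3) unfolding tight_coalition_def by simp
  qed
  show thesis
  proof
    fix i assume "x i \<noteq> y i"
    then show "c \<le> y i \<and> c < x i"
      using c_le x_ne_c unfolding D_def by fastforce
  next
    show "x j \<noteq> y j" "y j = c"
      using j x_ne_c[OF j(1)] unfolding D_def by (auto simp: min_def split: if_splits)
  qed
qed

lemma BLO_outcome_if_pinned_or_tight:
  fixes v :: "'b::finite \<Rightarrow> 'm set \<Rightarrow> real"
  assumes "x \<in> core v"
    and "\<And>i. (\<forall>y\<in>core v. y i = x i) \<or>
      (\<exists>S. i \<notin> S \<and> (\<forall>k. k \<notin> S \<longrightarrow> x k \<le> x i) \<and> tight_coalition v x S)"
  shows "BLO_outcome v x"
  unfolding BLO_outcome_def
proof (intro conjI assms(1) notI, elim bexE)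
  fix y assume y: "y \<in> core v" and dom: "leximin_dominates y x"
  have "y \<noteq> x"
    using dom unfolding leximin_dominates_def by auto
  obtain c j where "\<And>i. x i \<noteq> y i \<Longrightarrow> c \<le> y i \<and> c < x i" "x j \<noteq> y j" "y j = c"
    using core_lower_deviation[OF y \<open>y \<noteq> x\<close> assms(2)] by blast
  then have "\<not> leximin_dominates y x"
    by (rule not_leximin_dominates_if_lower_deviation)
  with dom show False
    by contradiction
qed

subsection \<open>The water-filling step\<close>

lemma finite_wf_ratios: "finite {wf_ratio v p Wa S | S. \<not> Wa \<subseteq> S}"
  by (rule finite_subset[of _ "wf_ratio v p Wa ` UNIV"]) auto

lemma wf_delta_le_wf_ratio: "\<not> Wa \<subseteq> S \<Longrightarrow> wf_delta v p Wa \<le> wf_ratio v p Wa S"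
  unfolding wf_delta_def by (rule Min_le[OF finite_wf_ratios]) blast

lemma wf_delta_nonneg:
  assumes "p \<in> core v" "Wa \<noteq> {}"
  shows "0 \<le> wf_delta v p Wa"
proof -
  have "wf_delta v p Wa \<in> {wf_ratio v p Wa S | S. \<not> Wa \<subseteq> S}"
    unfolding wf_delta_def using assms(2) by (intro Min_in[OF finite_wf_ratios]) blast
  then obtain S where "wf_delta v p Wa = wf_ratio v p Wa S"
    by blast
  moreover have "0 \<le> coal_value v UNIV - coal_value v S - (\<Sum>i\<in>UNIV - S. p i)"
    using assms(1) unfolding core_def by auto
  ultimately show ?thesis
    unfolding wf_ratio_def by simp
qed

lemma sum_compl_raise:
  fixes p :: "'b::finite \<Rightarrow> real"
  assumes "\<And>i. p' i = (if i \<in> W then p i + d else p i)"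
  shows "(\<Sum>i\<in>UNIV - S. p' i) = (\<Sum>i\<in>UNIV - S. p i) + d * real (card (W - S))"
proof -
  have "(\<Sum>i\<in>UNIV - S. p' i) = (\<Sum>i\<in>UNIV - S. p i) + (\<Sum>i\<in>UNIV - S. if i \<in> W then d else 0)"
    by (simp add: assms sum.distrib[symmetric] if_distrib cong: if_cong)
  also have "(\<Sum>i\<in>UNIV - S. if i \<in> W then d else 0) = (\<Sum>i\<in>W - S. d)"
    by (simp add: sum.inter_restrict[symmetric] Diff_eq Int_commute)
  finally show ?thesis
    by simp
qed

lemma wf_raise_in_core:
  assumes raise: "\<And>i. p' i = (if i \<in> Wa then p i + wf_delta v p Wa else p i)"
    and p: "p \<in> core v" and "Wa \<noteq> {}"
  shows "p' \<in> core v"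
proof -
  let ?d = "wf_delta v p Wa"
  have "0 \<le> ?d"
    using p \<open>Wa \<noteq> {}\<close> by (rule wf_delta_nonneg)
  then have "0 \<le> p' i" for i
    using p raise[of i] unfolding core_def by auto
  moreover have "(\<Sum>i\<in>UNIV - S. p' i) \<le> coal_value v UNIV - coal_value v S" for S
  proof -
    have sum_p': "(\<Sum>i\<in>UNIV - S. p' i) = (\<Sum>i\<in>UNIV - S. p i) + ?d * real (card (Wa - S))"
      by (rule sum_compl_raise[OF raise])
    have core_S: "(\<Sum>i\<in>UNIV - S. p i) \<le> coal_value v UNIV - coal_value v S"
      using p unfolding core_def by blast
    show ?thesis
    proof (cases "Wa \<subseteq> S")
      case True
      then have card0: "card (Wa - S) = 0"
        by simp
      show ?thesis
        using core_S by (simp only: sum_p' card0)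
    next
      case False
      then have "0 < real (card (Wa - S))"
        by (simp add: card_gt_0_iff)
      moreover have "?d \<le> wf_ratio v p Wa S"
        using False by (rule wf_delta_le_wf_ratio)
      ultimately show ?thesis
        using sum_p' unfolding wf_ratio_def by (simp add: le_divide_eq)
    qed
  qed
  ultimately show ?thesis
    unfolding core_def by blast
qed

lemma wf_raise_tight:
  assumes raise: "\<And>i. p' i = (if i \<in> Wa then p i + wf_delta v p Wa else p i)"
    and "\<not> Wa \<subseteq> S" "wf_ratio v p Wa S = wf_delta v p Wa"
  shows "tight_coalition v p' S"
proof -
  have "0 < real (card (Wa - S))"
    using assms(2) by (simp add: card_gt_0_iff)
  then have "wf_delta v p Wa * real (card (Wa - S))
      = coal_value v UNIV - coal_value v S - (\<Sum>i\<in>UNIV - S. p i)"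
    using assms(2,3) unfolding wf_ratio_def by (simp add: divide_eq_eq)
  moreover have "(\<Sum>i\<in>UNIV - S. p' i) = (\<Sum>i\<in>UNIV - S. p i) + wf_delta v p Wa * real (card (Wa - S))"
    by (rule sum_compl_raise[OF raise])
  ultimately show ?thesis
    unfolding tight_coalition_def by simp
qed

lemma exists_leaving_step:
  assumes "i \<in> W 0" "i \<notin> W n"
  shows "\<exists>t<n. i \<in> W t \<and> i \<notin> W (Suc t)"
  using assms(2)
proof (induction n)
  case 0
  with assms(1) show ?case
    by simp
next
  case (Suc n)
  show ?case
  proof (cases "i \<in> W n")
    case True
    with Suc.prems show ?thesis
      by blast
  next
    case False
    with Suc.IH show ?thesis
      using less_SucI by blast
  qed
qed

subsection \<open>The water-filling process\<close>

locale water_filling =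
  fixes v :: "'b::finite \<Rightarrow> 'm::finite set \<Rightarrow> real"
    and astar :: "'b \<Rightarrow> 'm set"
    and \<pi> :: "nat \<Rightarrow> 'b \<Rightarrow> real"
    and Wa :: "nat \<Rightarrow> 'b set"
  assumes v_empty: "\<And>i. v i {} = 0"
    and astar_feasible: "feasible_alloc UNIV astar"
    and astar_opt: "(\<Sum>i\<in>UNIV. v i (astar i)) = coal_value v UNIV"
    and init_pi: "\<pi> 0 = (\<lambda>i. 0)"
    and init_W: "Wa 0 = {i. astar i \<noteq> {}}"
    and steps: "\<And>t. Wa t \<noteq> {} \<Longrightarrow> wf_step v (\<pi> t) (Wa t) (\<pi> (Suc t)) (Wa (Suc t))"
begin

lemma step_payoff:
  assumes "Wa t \<noteq> {}"
  shows "\<pi> (Suc t) i = (if i \<in> Wa t then \<pi> t i + wf_delta v (\<pi> t) (Wa t) else \<pi> t i)"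
  using steps[OF assms] unfolding wf_step_def by blast

lemma step_active_tight:
  assumes "Wa t \<noteq> {}"
  obtains S where "\<not> Wa t \<subseteq> S" "Wa (Suc t) = Wa t \<inter> S" "tight_coalition v (\<pi> (Suc t)) S"
proof -
  obtain S where S: "\<not> Wa t \<subseteq> S" "wf_ratio v (\<pi> t) (Wa t) S = wf_delta v (\<pi> t) (Wa t)"
    "Wa (Suc t) = Wa t - (Wa t - S)"
    using steps[OF assms] unfolding wf_step_def by blast
  have "tight_coalition v (\<pi> (Suc t)) S"
    using step_payoff[OF assms] S(1,2) by (rule wf_raise_tight)
  then show thesis
    using that S by (simp add: Diff_Diff_Int)
qed

lemma step_active_psubset: "Wa t \<noteq> {} \<Longrightarrow> Wa (Suc t) \<subset> Wa t"
  by (metis step_active_tight Int_lower1 inf.absorb_iff1 psubsetI)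

lemma card_active_add_le:
  assumes "\<forall>s<t. Wa s \<noteq> {}"
  shows "card (Wa t) + t \<le> card (Wa 0)"
  using assms
proof (induction t)
  case (Suc t)
  then have "Wa (Suc t) \<subset> Wa t"
    by (simp add: step_active_psubset)
  then have "card (Wa (Suc t)) < card (Wa t)"
    by (simp add: psubset_card_mono)
  with Suc show ?case
    by simp
qed simp

lemma terminates:
  obtains T where "T \<le> card (Wa 0)" "Wa T = {}" "\<forall>t<T. Wa t \<noteq> {}"
proof -
  have "\<exists>t. Wa t = {}"
  proof (rule ccontr)
    assume "\<nexists>t. Wa t = {}"
    then show False
      using card_active_add_le[of "Suc (card (Wa 0))"] by simp
  qed
  define T where "T = (LEAST t. Wa t = {})"
  have "Wa T = {}"
    unfolding T_def by (rule LeastI_ex) fact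
  moreover have "\<forall>t<T. Wa t \<noteq> {}"
    unfolding T_def using not_less_Least by blast
  ultimately show thesis
    using that card_active_add_le[of T] by simp
qed

context
  fixes T :: nat
  assumes active_before: "\<forall>t<T. Wa t \<noteq> {}"
begin

lemma active_antimono: "t \<le> s \<Longrightarrow> s \<le> T \<Longrightarrow> Wa s \<subseteq> Wa t"
proof (induction s rule: dec_induct)
  case (step s)
  then show ?case
    using step_active_psubset[of s] active_before by fastforce
qed simp

lemma inactive_payoff_const: "t \<le> s \<Longrightarrow> s \<le> T \<Longrightarrow> k \<notin> Wa t \<Longrightarrow> \<pi> s k = \<pi> t k"
proof (induction s rule: dec_induct)
  case (step s)
  then have "k \<notin> Wa s"
    using active_antimono[of t s] by auto
  moreover have "Wa s \<noteq> {}"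
    using active_before step by simp
  ultimately show ?case
    using step step_payoff[of s k] by simp
qed simp

lemma payoff_in_core: "t \<le> T \<Longrightarrow> \<pi> t \<in> core v"
proof (induction t)
  case 0
  then show ?case
    using zero_in_core[of v, OF v_empty] init_pi by simp
next
  case (Suc t)
  then have "Wa t \<noteq> {}"
    using active_before by simp
  with Suc show ?case
    using wf_raise_in_core[OF step_payoff] by simp
qed

lemma active_payoff_max: "t \<le> T \<Longrightarrow> i \<in> Wa t \<Longrightarrow> \<pi> t j \<le> \<pi> t i"
proof (induction t arbitrary: i)
  case 0
  then show ?case
    using init_pi by simp
next
  case (Suc t)
  then have active: "Wa t \<noteq> {}" and core: "\<pi> t \<in> core v"
    using active_before payoff_in_core by auto
  have "0 \<le> wf_delta v (\<pi> t) (Wa t)"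
    using core active by (rule wf_delta_nonneg)
  moreover have "i \<in> Wa t"
    using Suc step_active_psubset[OF active] by auto
  moreover have "\<pi> t j \<le> \<pi> t i"
    using Suc \<open>i \<in> Wa t\<close> by simp
  ultimately show ?case
    using step_payoff[OF active, of i] step_payoff[OF active, of j] by auto
qed

lemma leaving_bidder_tight:
  assumes "Wa T = {}" "i \<in> Wa 0"
  shows "\<exists>S. i \<notin> S \<and> (\<forall>k. k \<notin> S \<longrightarrow> \<pi> T k \<le> \<pi> T i) \<and> tight_coalition v (\<pi> T) S"
proof -
  obtain t where t: "t < T" "i \<in> Wa t" "i \<notin> Wa (Suc t)"
    using exists_leaving_step[of i Wa T] assms by blast
  obtain S where S: "Wa (Suc t) = Wa t \<inter> S" "tight_coalition v (\<pi> (Suc t)) S"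
    using step_active_tight[of t] t by blast
  have i_notin: "i \<notin> S"
    using t S(1) by blast
  have frozen: "\<pi> T k = \<pi> (Suc t) k" if "k \<notin> S" for k
    using inactive_payoff_const[of "Suc t" T k] t that S(1) by simp
  have active: "Wa t \<noteq> {}"
    using t by auto
  have "0 \<le> wf_delta v (\<pi> t) (Wa t)"
    using t by (intro wf_delta_nonneg payoff_in_core) auto
  then have "\<pi> (Suc t) k \<le> \<pi> (Suc t) i" for k
    using active_payoff_max[of t i k] t step_payoff[OF active, of i] step_payoff[OF active, of k]
    by (cases "k \<in> Wa t") auto
  moreover have "tight_coalition v (\<pi> T) S"
    using S(2) frozen unfolding tight_coalition_def by simp
  ultimately show ?thesis
    using i_notin frozen by (intro exI[of _ S]) auto
qed

lemma final_payoff_BLO_outcome: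
  assumes "Wa T = {}"
  shows "BLO_outcome v (\<pi> T)"
proof (rule BLO_outcome_if_pinned_or_tight)
  show "\<pi> T \<in> core v"
    by (simp add: payoff_in_core)
  fix i
  show "(\<forall>y\<in>core v. y i = \<pi> T i) \<or>
      (\<exists>S. i \<notin> S \<and> (\<forall>k. k \<notin> S \<longrightarrow> \<pi> T k \<le> \<pi> T i) \<and> tight_coalition v (\<pi> T) S)"
  proof (cases "i \<in> Wa 0")
    case True
    then show ?thesis
      using leaving_bidder_tight[OF assms] by blast
  next
    case False
    then have "astar i = {}"
      using init_W by simp
    then have zero: "y i = 0" if "y \<in> core v" for y
      using core_unallocated_eq_0[where v = v, OF v_empty astar_feasible astar_opt] that by blast
    have "\<pi> T i = 0"
      by (rule zero) (simp add: payoff_in_core)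
    have "y i = \<pi> T i" if "y \<in> core v" for y
      using zero[OF that] \<open>\<pi> T i = 0\<close> by simp
    then show ?thesis
      by blast
  qed
qed

end

end

theorem lemma2:
  fixes v :: "'b::finite \<Rightarrow> 'm::finite set \<Rightarrow> real"
    and astar :: "'b \<Rightarrow> 'm set"
    and \<pi> :: "nat \<Rightarrow> 'b \<Rightarrow> real"
    and Wa :: "nat \<Rightarrow> 'b set"
  assumes v_nonneg: "\<And>i A. 0 \<le> v i A"
    and v_empty: "\<And>i. v i {} = 0"
    and astar_feasible: "feasible_alloc UNIV astar"
    and astar_opt: "(\<Sum>i\<in>UNIV. v i (astar i)) = coal_value v UNIV"
    and init_pi: "\<pi> 0 = (\<lambda>i. 0)"
    and init_W: "Wa 0 = {i. astar i \<noteq> {}}"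
    and steps: "\<And>t. Wa t \<noteq> {} \<Longrightarrow> wf_step v (\<pi> t) (Wa t) (\<pi> (Suc t)) (Wa (Suc t))"
  shows "\<exists>T. T \<le> card {i. astar i \<noteq> {}} \<and> Wa T = {} \<and> (\<forall>t<T. Wa t \<noteq> {})
             \<and> BLO_outcome v (\<pi> T)"
proof -
  interpret water_filling v astar \<pi> Wa
    using v_empty astar_feasible astar_opt init_pi init_W steps by unfold_locales
  obtain T where T: "T \<le> card (Wa 0)" "Wa T = {}" "\<forall>t<T. Wa t \<noteq> {}"
    by (rule terminates)
  have "BLO_outcome v (\<pi> T)"
    using T(3,2) by (rule final_payoff_BLO_outcome)
  with T show ?thesis
    using init_W by auto
qed

end
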